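(* For all $t,n\in\mathbb N$ we have $d(0,n)=0$ and \begin{align*} &d(4t,4n)=d(2t,2n),\quad d(4t,4n+1)=d(2t,2n),\quad d(4t,4n+2)=d(2t,2n+1),\quad d(4t,4n+3)=d(2t,2n+1),\\ &d(4t+1,4n)=d(2t,2n),\quad d(4t+1,4n+1)=d(2t+1,2n),\quad d(4t+1,4n+2)=d(2t,2n+1)+1,\quad d(4t+1,4n+3)=d(2t+1,2n+1)-1,\\ &d(4t+2,4n)=d(2t+1,2n),\quad d(4t+2,4n+1)=d(2t+1,2n)+1,\quad d(4t+2,4n+2)=d(2t+1,2n+1),\quad d(4t+2,4n+3)=d(2t+1,2n+1)-1,\\ &d(4t+3,4n)=d(2t+1,2n)+1,\quad d(4t+3,4n+1)=d(2t+2,2n),\quad d(4t+3,4n+2)=d(2t+1,2n+1),\quad d(4t+3,4n+3)=d(2t+2,2n+1)-1. \end{align*}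
   Context: For $n\in\mathbb N=\{0,1,2,\dots\}$ with binary digits $\delta_j(n)\in\{0,1\}$ ($n=\sum_j\delta_j(n)2^j$), let $\mathsf r(n)=\#\{j\ge0:\delta_{j+1}(n)=\delta_j(n)=1\}$, the number of (overlapping) occurrences of the block $\mathtt{11}$ in the binary expansion of $n$. Let $d(t,n)=\mathsf r(n+t)-\mathsf r(n)$. *)

theory Defs
  imports Main
begin

definition bdigit :: "nat \<Rightarrow> nat \<Rightarrow> nat" where
  "bdigit j n = (n div 2 ^ j) mod 2"

definition r11 :: "nat \<Rightarrow> nat" where
  "r11 n = card {j. bdigit (Suc j) n = 1 \<and> bdigit j n = 1}"

definition d :: "nat \<Rightarrow> nat \<Rightarrow> int" where
  "d t n = int (r11 (n + t)) - int (r11 n)"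

end

theory Submission
  imports Defs
begin

text \<open>Dropping the last binary digit of n removes exactly one block 11, at position 0, iff
  n mod 4 = 3, so r11 n = r11 (n div 2) + [n mod 4 = 3]. Since the last digit of n + t is
  produced with carry (n mod 2)(t mod 2), halving gives
  d t n = d (t div 2 + (n mod 2)(t mod 2)) (n div 2) + [(n + t) mod 4 = 3] - [n mod 4 = 3],
  and specialising to t = 4t' + a, n = 4n' + b yields all sixteen identities.\<close>

definition block11_positions :: "nat \<Rightarrow> nat set" where
  "block11_positions n = {j. bdigit (Suc j) n = 1 \<and> bdigit j n = 1}"

lemma r11_eq_card_block11_positions: "r11 n = card (block11_positions n)"
  by (simp add: r11_def block11_positions_def)

lemma bdigit_Suc: "bdigit (Suc j) n = bdigit j (n div 2)"
  by (simp add: bdigit_def div_mult2_eq mult.commute)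

lemma finite_block11_positions: "finite (block11_positions n)"
proof (rule finite_subset)
  show "block11_positions n \<subseteq> {..<n}"
  proof
    fix j assume "j \<in> block11_positions n"
    then have "2 ^ j \<le> n"
      by (auto simp: block11_positions_def bdigit_def div_less not_less[symmetric])
    then show "j \<in> {..<n}" using order_less_le_trans[OF less_exp] by simp
  qed
qed simp

lemma zero_in_block11_positions_iff: "0 \<in> block11_positions n \<longleftrightarrow> n mod 4 = 3"
  by (simp add: block11_positions_def bdigit_def) presburger

lemma Suc_in_block11_positions_iff:
  "Suc j \<in> block11_positions n \<longleftrightarrow> j \<in> block11_positions (n div 2)"
  by (simp add: block11_positions_def bdigit_Suc)

lemma block11_positions_rec:
  "block11_positions n = (if n mod 4 = 3 then {0} else {}) \<union> Suc ` block11_positions (n div 2)"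
  (is "_ = ?R")
proof (rule set_eqI)
  show "j \<in> block11_positions n \<longleftrightarrow> j \<in> ?R" for j
    by (cases j) (auto simp: zero_in_block11_positions_iff Suc_in_block11_positions_iff)
qed

lemma r11_rec: "r11 n = r11 (n div 2) + of_bool (n mod 4 = 3)"
  unfolding r11_eq_card_block11_positions block11_positions_rec[of n]
  using finite_block11_positions[of "n div 2"] by (simp add: card_image card_insert_if)

lemma d_rec:
  "d t n = d (t div 2 + n mod 2 * (t mod 2)) (n div 2)
     + of_bool ((n + t) mod 4 = 3) - of_bool (n mod 4 = 3)"
proof -
  have "(n + t) div 2 = n div 2 + (t div 2 + n mod 2 * (t mod 2))"
    by (cases "even n"; cases "even t") (auto elim!: evenE oddE)
  then show ?thesis unfolding d_def r11_rec[of n] r11_rec[of "n + t"] by simp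
qed

lemma d_quadruple:
  "d (4*t + a) (4*n + b) = d (2*t + a div 2 + b mod 2 * (a mod 2)) (2*n + b div 2)
     + of_bool ((a + b) mod 4 = 3) - of_bool (b mod 4 = 3)"
proof -
  have div2: "(4*t + a) div 2 = 2*t + a div 2" "(4*n + b) div 2 = 2*n + b div 2"
    and mod2: "(4*t + a) mod 2 = a mod 2" "(4*n + b) mod 2 = b mod 2"
    and mod4: "(4*n + b + (4*t + a)) mod 4 = (a + b) mod 4" "(4*n + b) mod 4 = b mod 4"
    by presburger+
  show ?thesis
    using d_rec[of "4*t + a" "4*n + b"] unfolding div2 mod2 mod4 .
qed

theorem lemma3p1:
  fixes t n :: nat
  shows "d 0 n = 0
    \<and> d (4*t) (4*n) = d (2*t) (2*n)
    \<and> d (4*t) (4*n+1) = d (2*t) (2*n)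
    \<and> d (4*t) (4*n+2) = d (2*t) (2*n+1)
    \<and> d (4*t) (4*n+3) = d (2*t) (2*n+1)
    \<and> d (4*t+1) (4*n) = d (2*t) (2*n)
    \<and> d (4*t+1) (4*n+1) = d (2*t+1) (2*n)
    \<and> d (4*t+1) (4*n+2) = d (2*t) (2*n+1) + 1
    \<and> d (4*t+1) (4*n+3) = d (2*t+1) (2*n+1) - 1
    \<and> d (4*t+2) (4*n) = d (2*t+1) (2*n)
    \<and> d (4*t+2) (4*n+1) = d (2*t+1) (2*n) + 1
    \<and> d (4*t+2) (4*n+2) = d (2*t+1) (2*n+1)
    \<and> d (4*t+2) (4*n+3) = d (2*t+1) (2*n+1) - 1
    \<and> d (4*t+3) (4*n) = d (2*t+1) (2*n) + 1
    \<and> d (4*t+3) (4*n+1) = d (2*t+2) (2*n)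
    \<and> d (4*t+3) (4*n+2) = d (2*t+1) (2*n+1)
    \<and> d (4*t+3) (4*n+3) = d (2*t+2) (2*n+1) - 1"
proof -
  have "d 0 n = 0" by (simp add: d_def)
  then show ?thesis
    using d_quadruple[of t 0 n 0] d_quadruple[of t 0 n 1] d_quadruple[of t 0 n 2] d_quadruple[of t 0 n 3]
      d_quadruple[of t 1 n 0] d_quadruple[of t 1 n 1] d_quadruple[of t 1 n 2] d_quadruple[of t 1 n 3]
      d_quadruple[of t 2 n 0] d_quadruple[of t 2 n 1] d_quadruple[of t 2 n 2] d_quadruple[of t 2 n 3]
      d_quadruple[of t 3 n 0] d_quadruple[of t 3 n 1] d_quadruple[of t 3 n 2] d_quadruple[of t 3 n 3]
    by simp
qed
end
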